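(* In any concurrent run of the Block-STM algorithm (described in the context) on a block of $n$ transactions, if a thread joins after invoking the $\mathtt{run}$ procedure, then all transactions $tx_0,\dots,tx_{n-1}$ are globally committed at that time.
   Context: Model: threads perform atomic operations that appear to take place in a single global order; a "time" is a point in this order. Locks protect per-transaction status and dependency sets. Problem. A block is a sequence of transactions $tx_0,\dots,tx_{n-1}$ ($n=\mathtt{BLOCK.size()}$), each a deterministic program reading and writing memory locations. Shared state. MVMemory: a map $\mathit{data}$ from $(\text{location},\text{txn index})$ to (incarnation number, value) or a marker ESTIMATE; arrays $\mathit{last\_written\_locations}[j]$, $\mathit{last\_read\_set}[j]$, accessed atomically. A version is $(j,i)$. Scheduler: atomic counters $\mathit{execution\_idx}=0$, $\mathit{validation\_idx}=0$, $\mathit{decrease\_cnt}=0$, $\mathit{num\_active\_tasks}=0$, flag $\mathit{done\_marker}=$false; lock-protected $\mathit{txn\_status}[j]=(\text{incarnation},\text{status})$, initially $(0,\mathtt{READY\_TO\_EXECUTE})$, status $\in\{\mathtt{READY\_TO\_EXECUTE},\mathtt{EXECUTING},\mathtt{EXECUTED},\mathtt{ABORTING}\}$; lock-protected dependency sets $\mathit{txn\_dependency}[j]$, initially empty. MVMemory operations. $\mathtt{read}(p,j)$: largest $k<j$ with an entry $(p,k)$; none: NOT_FOUND; ESTIMATE: READ_ERROR with blocking index $k$; else OK with version and value. $\mathtt{record}((j,i),R,W)$: write $\mathit{data}[(p,j)]:=(i,v)$ for $(p,v)\in W$, remove entries $(p,j)$ of previously written but not rewritten locations, update $\mathit{last\_written\_locations}[j]$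 and $\mathit{last\_read\_set}[j]:=R$, return whether a new location was written. $\mathtt{convert\_writes\_to\_estimates}(j)$ sets all entries $(p,j)$ with $p\in\mathit{last\_written\_locations}[j]$ to ESTIMATE. $\mathtt{validate\_read\_set}(j)$ returns true iff re-reading each recorded location with $\mathtt{read}(p,j)$ gives the same recorded version (NOT_FOUND for $\bot$) and no READ_ERROR. VM.execute($j$) runs $tx_j$ locally, reading own writes, else $\mathtt{read}(p,j)$ (NOT_FOUND: read initial storage, record $(p,\bot)$; OK: record version; READ_ERROR: stop, return blocking index); never writes shared memory. Scheduler. $\mathtt{decrease\_execution\_idx}(t)$/$\mathtt{decrease\_validation\_idx}(t)$: index $:=\min(\text{index},t)$, then increment $\mathit{decrease\_cnt}$. $\mathtt{try\_incarnate}(k)$: if $k<n$ and $tx_k$'s status is $\mathtt{READY\_TO\_EXECUTE}$ (incarnation $i$), set $\mathtt{EXECUTING}$, return $(k,i)$; else decrement $\mathit{num\_active\_tasks}$, return none. $\mathtt{next\_task}$: if $\mathit{validation\_idx}<\mathit{execution\_idx}$: if $\mathit{validation\_idx}\ge n$, call check_done, return none; else increment $\mathit{num\_active\_tasks}$, fetch-and-increment $\mathit{validation\_idx}$ obtaining $k$; if $k<n$ and $tx_k$'s status is $\mathtt{EXECUTED}$ (incarnation $i$) return validation task $(k,i)$, else decrement $\mathit{num\_active\_tasks}$. Otherwise: if $\mathit{execution\_idx}\ge n$ call check_done, return none; else increment $\mathit{num\_active\_tasks}$, fetch-and-increment $\mathit{execution\_idx}$ obtaining $k$, return $\mathtt{try\_incarnate}(k)$.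 $\mathtt{check\_done}$: read $c:=\mathit{decrease\_cnt}$, then if $\min(\mathit{execution\_idx},\mathit{validation\_idx})\ge n$, then $\mathit{num\_active\_tasks}=0$, then $\mathit{decrease\_cnt}=c$, set $\mathit{done\_marker}:=$true. Execution task $(k,i)$: run VM.execute($k$). On READ_ERROR with blocking $b$: under lock of $\mathit{txn\_dependency}[b]$, if $tx_b$'s status is $\mathtt{EXECUTED}$ retry execution; else set $tx_k$'s status $\mathtt{ABORTING}$, add $k$ to $\mathit{txn\_dependency}[b]$, release, decrement $\mathit{num\_active\_tasks}$. Otherwise $w:=\mathtt{record}(\dots)$; set status $\mathtt{EXECUTED}$; swap out $\mathit{txn\_dependency}[k]$, set each dependent $d$ to $(\text{incarnation}+1,\mathtt{READY\_TO\_EXECUTE})$ and if any, $\mathtt{decrease\_execution\_idx}$(min dependent); if $\mathit{validation\_idx}>k$: if $w$, $\mathtt{decrease\_validation\_idx}(k)$, else return validation task $(k,i)$ keeping $\mathit{num\_active\_tasks}$; if no task returned, decrement $\mathit{num\_active\_tasks}$. Validation task $(k,i)$: if $\mathtt{validate\_read\_set}(k)$ fails and under lock $\mathit{txn\_status}[k]=(i,\mathtt{EXECUTED})$, set $\mathtt{ABORTING}$ (aborted). If aborted: convert writes of $k$ to ESTIMATE; $\mathit{txn\_status}[k]:=(i+1,\mathtt{READY\_TO\_EXECUTE})$; $\mathtt{decrease\_validation\_idx}(k+1)$; if $\mathit{execution\_idx}>k$ and $\mathtt{try\_incarnate}(k)$ returns a version, return that execution task keeping $\mathit{num\_active\_tasks}$.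 Otherwise decrement $\mathit{num\_active\_tasks}$. $\mathtt{run}$: while $\mathit{done\_marker}$ is false, perform the task in hand or obtain one via next_task. A thread joins when it returns from $\mathtt{run}$. Intervals. Pre-validation of $tx_j$: from a fetch-and-increment of $\mathit{validation\_idx}$ returning $j$ until just before the corresponding decrement in next_task or just before the validation task is returned. Execution of $(j,i)$: from setting $tx_j$'s status to $\mathtt{EXECUTING}$ (incarnation $i$) until its abort via the dependency mechanism, or just before its final decrement of $\mathit{num\_active\_tasks}$, or just before it returns a validation task. Validation of $(j,i)$: from handing the task to a thread until just before its final decrement or just before it returns an execution task. Global commit index at time $T$: minimum of $\mathit{validation\_idx}$, all $j$ with status not $\mathtt{EXECUTED}$, indices with ongoing pre-validation, and indices of versions with ongoing execution or validation. $tx_0,\dots,tx_k$ are globally committed at $T$ if this index exceeds $k$. *)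

theory Defs
  imports Main
begin

text \<open>
  A transaction is a deterministic program over locations 'l and values 'v.
  Its next instruction is a function of the history of results of the
  instructions already executed (None for a write, Some v for a read).
  Transaction j of the block is  prog j ; the block size is n.
\<close>

datatype ('l, 'v) instr = IRead 'l | IWrite 'l 'v | IDone

datatype tstatus = READY_TO_EXECUTE | EXECUTING | EXECUTED | ABORTING

datatype 'v entry = Written nat 'v  \<comment> \<open>(incarnation, value)\<close>
                  | ESTIMATE

datatype 'v read_result = NOT_FOUND | OK "nat \<times> nat" 'v | READ_ERROR nat

datatype task = ExecT nat nat | ValT nat nat

fun task_idx :: "task \<Rightarrow> nat" where
  "task_idx (ExecT k i) = k"
| "task_idx (ValT k i) = k"

text \<open>Shared state (MVMemory and scheduler).  Versions are pairs (txn index, incarnation).\<close>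

record ('l, 'v) gst =
  g_data   :: "'l \<times> nat \<Rightarrow> 'v entry option"
  g_lw     :: "nat \<Rightarrow> 'l list"                            \<comment> \<open>last_written_locations\<close>
  g_lr     :: "nat \<Rightarrow> ('l \<times> (nat \<times> nat) option) list"  \<comment> \<open>last_read_set; None = \<bottom>\<close>
  g_eidx   :: nat        \<comment> \<open>execution_idx\<close>
  g_vidx   :: nat        \<comment> \<open>validation_idx\<close>
  g_dcnt   :: nat        \<comment> \<open>decrease_cnt\<close>
  g_nact   :: int        \<comment> \<open>num_active_tasks\<close>
  g_done   :: bool       \<comment> \<open>done_marker\<close>
  g_status :: "nat \<Rightarrow> nat \<times> tstatus"   \<comment> \<open>txn_status\<close>
  g_deps   :: "nat \<Rightarrow> nat set"         \<comment> \<open>txn_dependency\<close>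

definition mv_read :: "('l \<times> nat \<Rightarrow> 'v entry option) \<Rightarrow> 'l \<Rightarrow> nat \<Rightarrow> 'v read_result" where
  "mv_read d p j =
     (let ks = {k. k < j \<and> d (p, k) \<noteq> None} in
      if ks = {} then NOT_FOUND
      else (let k = Max ks in
            case d (p, k) of
              Some ESTIMATE \<Rightarrow> READ_ERROR k
            | Some (Written i v) \<Rightarrow> OK (k, i) v
            | None \<Rightarrow> NOT_FOUND))"

text \<open>Thread-local control state (program counter plus local variables).
  Each transition of a thread performs at most one atomic shared-memory operation
  (or one critical section under a lock).\<close>

datatype ('l, 'v) tst =
    Loop "task option"           \<comment> \<open>top of the run loop, with the task in hand\<close>
  | Joined "task option"         \<comment> \<open>returned from run\<close>
  \<comment> \<open>next_task\<close>
  | NT_V | NT_E nat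
  | NV_Chk | NV_Inc | NV_Fai | NV_Status nat | NV_Dec nat
  | NE_Chk | NE_Inc | NE_Fai | NE_TI nat | NE_TIDec
  \<comment> \<open>check_done\<close>
  | CD1 | CD2 nat | CD3 nat nat | CD4 nat | CD5 nat | CD6
  \<comment> \<open>execution task: VM.execute (read set, local write map, written locations, history)\<close>
  | EX_Run nat nat "('l \<times> (nat \<times> nat) option) list" "'l \<Rightarrow> 'v option" "'l list" "'v option list"
  | EX_Dep nat nat nat | EX_AbortDec
  \<comment> \<open>record\<close>
  | REC_W nat nat "('l \<times> (nat \<times> nat) option) list" "('l \<times> 'v) list" "('l \<times> 'v) list"
  | REC_Prev nat nat "('l \<times> (nat \<times> nat) option) list" "('l \<times> 'v) list"
  | REC_Rm nat nat "('l \<times> (nat \<times> nat) option) list" "('l \<times> 'v) list" bool "'l list"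
  | REC_LW nat nat "('l \<times> (nat \<times> nat) option) list" "('l \<times> 'v) list" bool
  | REC_LR nat nat "('l \<times> (nat \<times> nat) option) list" bool
  \<comment> \<open>rest of the execution task\<close>
  | FE_Status nat nat bool | FE_Swap nat nat bool
  | FE_Res nat nat bool "nat list" "nat option"
  | FE_DecE nat nat bool nat | FE_CntE nat nat bool | FE_VI nat nat bool
  | FE_DecV nat nat | FE_CntV nat nat | FE_Dec nat nat
  \<comment> \<open>validation task\<close>
  | VA_Start nat nat | VA_Chk nat nat "('l \<times> (nat \<times> nat) option) list"
  | VA_Abort nat nat | VA_ConvStart nat nat | VA_Conv nat nat "'l list"
  | VA_Ready nat nat | VA_DecV nat nat | VA_Cnt nat nat | VA_EI nat nat
  | VA_TI nat nat | VA_TIDec nat nat | VA_Dec nat nat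

text \<open>One atomic step of a thread, given block size n, transactions prog and initial storage init.
  None means the thread cannot step (it has joined).\<close>

fun step1 :: "nat \<Rightarrow> (nat \<Rightarrow> 'v option list \<Rightarrow> ('l, 'v) instr) \<Rightarrow> ('l \<Rightarrow> 'v)
    \<Rightarrow> ('l, 'v) gst \<Rightarrow> ('l, 'v) tst \<Rightarrow> (('l, 'v) gst \<times> ('l, 'v) tst) option" where
  "step1 n prog init g (Loop t) =
     (if g_done g then Some (g, Joined t)
      else (case t of
              None \<Rightarrow> Some (g, NT_V)
            | Some (ExecT k i) \<Rightarrow> Some (g, EX_Run k i [] Map.empty [] [])
            | Some (ValT k i) \<Rightarrow> Some (g, VA_Start k i)))"
| "step1 n prog init g (Joined t) = None"
  \<comment> \<open>next_task: compare validation_idx < execution_idx (two atomic loads)\<close>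
| "step1 n prog init g NT_V = Some (g, NT_E (g_vidx g))"
| "step1 n prog init g (NT_E v) = (if v < g_eidx g then Some (g, NV_Chk) else Some (g, NE_Chk))"
| "step1 n prog init g NV_Chk = (if g_vidx g \<ge> n then Some (g, CD1) else Some (g, NV_Inc))"
| "step1 n prog init g NV_Inc = Some (g\<lparr>g_nact := g_nact g + 1\<rparr>, NV_Fai)"
| "step1 n prog init g NV_Fai = Some (g\<lparr>g_vidx := g_vidx g + 1\<rparr>, NV_Status (g_vidx g))"
| "step1 n prog init g (NV_Status k) =
     (if k < n \<and> snd (g_status g k) = EXECUTED
      then Some (g, Loop (Some (ValT k (fst (g_status g k)))))
      else Some (g, NV_Dec k))"
| "step1 n prog init g (NV_Dec k) = Some (g\<lparr>g_nact := g_nact g - 1\<rparr>, Loop None)"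
| "step1 n prog init g NE_Chk = (if g_eidx g \<ge> n then Some (g, CD1) else Some (g, NE_Inc))"
| "step1 n prog init g NE_Inc = Some (g\<lparr>g_nact := g_nact g + 1\<rparr>, NE_Fai)"
| "step1 n prog init g NE_Fai = Some (g\<lparr>g_eidx := g_eidx g + 1\<rparr>, NE_TI (g_eidx g))"
| "step1 n prog init g (NE_TI k) =
     (if k < n \<and> snd (g_status g k) = READY_TO_EXECUTE
      then Some (g\<lparr>g_status := (g_status g)(k := (fst (g_status g k), EXECUTING))\<rparr>,
                 Loop (Some (ExecT k (fst (g_status g k)))))
      else Some (g, NE_TIDec))"
| "step1 n prog init g NE_TIDec = Some (g\<lparr>g_nact := g_nact g - 1\<rparr>, Loop None)"
| "step1 n prog init g CD1 = Some (g, CD2 (g_dcnt g))"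
| "step1 n prog init g (CD2 c) = Some (g, CD3 c (g_eidx g))"
| "step1 n prog init g (CD3 c e) =
     (if min e (g_vidx g) \<ge> n then Some (g, CD4 c) else Some (g, Loop None))"
| "step1 n prog init g (CD4 c) = (if g_nact g = 0 then Some (g, CD5 c) else Some (g, Loop None))"
| "step1 n prog init g (CD5 c) = (if g_dcnt g = c then Some (g, CD6) else Some (g, Loop None))"
| "step1 n prog init g CD6 = Some (g\<lparr>g_done := True\<rparr>, Loop None)"
| "step1 n prog init g (EX_Run k i rs ws wl h) =
     (case prog k h of
        IDone \<Rightarrow> (let W = map (\<lambda>l. (l, the (ws l))) wl in Some (g, REC_W k i rs W W))
      | IWrite l v \<Rightarrow>
          Some (g, EX_Run k i rs (ws(l \<mapsto> v)) (if l \<in> set wl then wl else wl @ [l]) (h @ [None]))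
      | IRead l \<Rightarrow>
          (case ws l of
             Some v \<Rightarrow> Some (g, EX_Run k i rs ws wl (h @ [Some v]))
           | None \<Rightarrow>
              (case mv_read (g_data g) l k of
                 NOT_FOUND \<Rightarrow> Some (g, EX_Run k i (rs @ [(l, None)]) ws wl (h @ [Some (init l)]))
               | OK ver v \<Rightarrow> Some (g, EX_Run k i (rs @ [(l, Some ver)]) ws wl (h @ [Some v]))
               | READ_ERROR b \<Rightarrow> Some (g, EX_Dep k i b))))"
  \<comment> \<open>add_dependency (critical section under the lock of txn_dependency[b])\<close>
| "step1 n prog init g (EX_Dep k i b) =
     (if snd (g_status g b) = EXECUTED then Some (g, EX_Run k i [] Map.empty [] [])
      else Some (g\<lparr>g_status := (g_status g)(k := (fst (g_status g k), ABORTING)),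
                   g_deps := (g_deps g)(b := insert k (g_deps g b))\<rparr>, EX_AbortDec))"
| "step1 n prog init g EX_AbortDec = Some (g\<lparr>g_nact := g_nact g - 1\<rparr>, Loop None)"
| "step1 n prog init g (REC_W k i R W todo) =
     (case todo of
        [] \<Rightarrow> Some (g, REC_Prev k i R W)
      | (p, v) # rest \<Rightarrow> Some (g\<lparr>g_data := (g_data g)((p, k) := Some (Written i v))\<rparr>, REC_W k i R W rest))"
| "step1 n prog init g (REC_Prev k i R W) =
     (let prev = g_lw g k; new = map fst W in
      Some (g, REC_Rm k i R W (\<exists>p\<in>set new. p \<notin> set prev) (filter (\<lambda>p. p \<notin> set new) prev)))"
| "step1 n prog init g (REC_Rm k i R W w rm) =
     (case rm of
        [] \<Rightarrow> Some (g, REC_LW k i R W w)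
      | p # rest \<Rightarrow> Some (g\<lparr>g_data := (g_data g)((p, k) := None)\<rparr>, REC_Rm k i R W w rest))"
| "step1 n prog init g (REC_LW k i R W w) =
     Some (g\<lparr>g_lw := (g_lw g)(k := map fst W)\<rparr>, REC_LR k i R w)"
| "step1 n prog init g (REC_LR k i R w) =
     Some (g\<lparr>g_lr := (g_lr g)(k := R)\<rparr>, FE_Status k i w)"
| "step1 n prog init g (FE_Status k i w) =
     Some (g\<lparr>g_status := (g_status g)(k := (fst (g_status g k), EXECUTED))\<rparr>, FE_Swap k i w)"
| "step1 n prog init g (FE_Swap k i w) =
     (let D = g_deps g k in
      Some (g\<lparr>g_deps := (g_deps g)(k := {})\<rparr>,
            FE_Res k i w (sorted_list_of_set D) (if D = {} then None else Some (Min D))))"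
| "step1 n prog init g (FE_Res k i w ds mn) =
     (case ds of
        [] \<Rightarrow> (case mn of None \<Rightarrow> Some (g, FE_VI k i w) | Some m \<Rightarrow> Some (g, FE_DecE k i w m))
      | d # rest \<Rightarrow>
          Some (g\<lparr>g_status := (g_status g)(d := (fst (g_status g d) + 1, READY_TO_EXECUTE))\<rparr>,
                FE_Res k i w rest mn))"
| "step1 n prog init g (FE_DecE k i w m) =
     Some (g\<lparr>g_eidx := min (g_eidx g) m\<rparr>, FE_CntE k i w)"
| "step1 n prog init g (FE_CntE k i w) = Some (g\<lparr>g_dcnt := g_dcnt g + 1\<rparr>, FE_VI k i w)"
| "step1 n prog init g (FE_VI k i w) =
     (if g_vidx g > k then
        (if w then Some (g, FE_DecV k i) else Some (g, Loop (Some (ValT k i))))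
      else Some (g, FE_Dec k i))"
| "step1 n prog init g (FE_DecV k i) = Some (g\<lparr>g_vidx := min (g_vidx g) k\<rparr>, FE_CntV k i)"
| "step1 n prog init g (FE_CntV k i) = Some (g\<lparr>g_dcnt := g_dcnt g + 1\<rparr>, FE_Dec k i)"
| "step1 n prog init g (FE_Dec k i) = Some (g\<lparr>g_nact := g_nact g - 1\<rparr>, Loop None)"
| "step1 n prog init g (VA_Start k i) = Some (g, VA_Chk k i (g_lr g k))"
| "step1 n prog init g (VA_Chk k i R) =
     (case R of
        [] \<Rightarrow> Some (g, VA_Dec k i)
      | (p, ver) # rest \<Rightarrow>
          (let ok = (case mv_read (g_data g) p k of
                       NOT_FOUND \<Rightarrow> ver = None
                     | OK ver' v \<Rightarrow> ver = Some ver'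
                     | READ_ERROR b \<Rightarrow> False)
           in if ok then Some (g, VA_Chk k i rest) else Some (g, VA_Abort k i)))"
| "step1 n prog init g (VA_Abort k i) =
     (if g_status g k = (i, EXECUTED)
      then Some (g\<lparr>g_status := (g_status g)(k := (i, ABORTING))\<rparr>, VA_ConvStart k i)
      else Some (g, VA_Dec k i))"
| "step1 n prog init g (VA_ConvStart k i) = Some (g, VA_Conv k i (g_lw g k))"
| "step1 n prog init g (VA_Conv k i L) =
     (case L of
        [] \<Rightarrow> Some (g, VA_Ready k i)
      | p # rest \<Rightarrow> Some (g\<lparr>g_data := (g_data g)((p, k) := Some ESTIMATE)\<rparr>, VA_Conv k i rest))"
| "step1 n prog init g (VA_Ready k i) =
     Some (g\<lparr>g_status := (g_status g)(k := (i + 1, READY_TO_EXECUTE))\<rparr>, VA_DecV k i)"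
| "step1 n prog init g (VA_DecV k i) = Some (g\<lparr>g_vidx := min (g_vidx g) (k + 1)\<rparr>, VA_Cnt k i)"
| "step1 n prog init g (VA_Cnt k i) = Some (g\<lparr>g_dcnt := g_dcnt g + 1\<rparr>, VA_EI k i)"
| "step1 n prog init g (VA_EI k i) = (if g_eidx g > k then Some (g, VA_TI k i) else Some (g, VA_Dec k i))"
| "step1 n prog init g (VA_TI k i) =
     (if k < n \<and> snd (g_status g k) = READY_TO_EXECUTE
      then Some (g\<lparr>g_status := (g_status g)(k := (fst (g_status g k), EXECUTING))\<rparr>,
                 Loop (Some (ExecT k (fst (g_status g k)))))
      else Some (g, VA_TIDec k i))"
| "step1 n prog init g (VA_TIDec k i) = Some (g\<lparr>g_nact := g_nact g - 1\<rparr>, Loop None)"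
| "step1 n prog init g (VA_Dec k i) = Some (g\<lparr>g_nact := g_nact g - 1\<rparr>, Loop None)"

type_synonym ('l, 'v, 't) conf = "('l, 'v) gst \<times> ('t \<Rightarrow> ('l, 'v) tst)"

definition init_gst :: "('l, 'v) gst" where
  "init_gst = \<lparr>g_data = (\<lambda>_. None), g_lw = (\<lambda>_. []), g_lr = (\<lambda>_. []),
               g_eidx = 0, g_vidx = 0, g_dcnt = 0, g_nact = 0, g_done = False,
               g_status = (\<lambda>_. (0, READY_TO_EXECUTE)), g_deps = (\<lambda>_. {})\<rparr>"

definition init_conf :: "('l, 'v, 't) conf" where
  "init_conf = (init_gst, (\<lambda>_. Loop None))"

definition bstep :: "nat \<Rightarrow> (nat \<Rightarrow> 'v option list \<Rightarrow> ('l, 'v) instr) \<Rightarrow> ('l \<Rightarrow> 'v)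
    \<Rightarrow> 't \<Rightarrow> ('l, 'v, 't) conf \<Rightarrow> ('l, 'v, 't) conf \<Rightarrow> bool" where
  "bstep n prog init t C C' \<longleftrightarrow>
     (\<exists>g' l'. step1 n prog init (fst C) (snd C t) = Some (g', l') \<and> C' = (g', (snd C)(t := l')))"

definition reachable :: "nat \<Rightarrow> (nat \<Rightarrow> 'v option list \<Rightarrow> ('l, 'v) instr) \<Rightarrow> ('l \<Rightarrow> 'v)
    \<Rightarrow> ('l, 'v, 't) conf \<Rightarrow> bool" where
  "reachable n prog init C \<longleftrightarrow> (\<lambda>C C'. \<exists>t. bstep n prog init t C C')\<^sup>*\<^sup>* init_conf C"

fun is_joined :: "('l, 'v) tst \<Rightarrow> bool" where
  "is_joined (Joined t) = True"
| "is_joined _ = False"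

text \<open>Index of the ongoing pre-validation / execution / validation interval of a thread, if any.\<close>
fun ongoing :: "('l, 'v) tst \<Rightarrow> nat option" where
  "ongoing (Loop t) = map_option task_idx t"
| "ongoing (Joined t) = map_option task_idx t"
| "ongoing (NV_Status k) = Some k"
| "ongoing (NV_Dec k) = Some k"
| "ongoing (EX_Run k i rs ws wl h) = Some k"
| "ongoing (EX_Dep k i b) = Some k"
| "ongoing (REC_W k i R W todo) = Some k"
| "ongoing (REC_Prev k i R W) = Some k"
| "ongoing (REC_Rm k i R W w rm) = Some k"
| "ongoing (REC_LW k i R W w) = Some k"
| "ongoing (REC_LR k i R w) = Some k"
| "ongoing (FE_Status k i w) = Some k"
| "ongoing (FE_Swap k i w) = Some k"
| "ongoing (FE_Res k i w ds mn) = Some k"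
| "ongoing (FE_DecE k i w m) = Some k"
| "ongoing (FE_CntE k i w) = Some k"
| "ongoing (FE_VI k i w) = Some k"
| "ongoing (FE_DecV k i) = Some k"
| "ongoing (FE_CntV k i) = Some k"
| "ongoing (FE_Dec k i) = Some k"
| "ongoing (VA_Start k i) = Some k"
| "ongoing (VA_Chk k i R) = Some k"
| "ongoing (VA_Abort k i) = Some k"
| "ongoing (VA_ConvStart k i) = Some k"
| "ongoing (VA_Conv k i L) = Some k"
| "ongoing (VA_Ready k i) = Some k"
| "ongoing (VA_DecV k i) = Some k"
| "ongoing (VA_Cnt k i) = Some k"
| "ongoing (VA_EI k i) = Some k"
| "ongoing (VA_TI k i) = Some k"
| "ongoing (VA_TIDec k i) = Some k"
| "ongoing (VA_Dec k i) = Some k"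
| "ongoing _ = None"

definition global_commit_index :: "nat \<Rightarrow> ('l, 'v, 't) conf \<Rightarrow> nat" where
  "global_commit_index n C =
     Inf ({g_vidx (fst C)}
          \<union> {j. j < n \<and> snd (g_status (fst C) j) \<noteq> EXECUTED}
          \<union> {j. \<exists>t. ongoing (snd C t) = Some j})"

definition globally_committed :: "nat \<Rightarrow> ('l, 'v, 't) conf \<Rightarrow> nat \<Rightarrow> bool" where
  "globally_committed n C k \<longleftrightarrow> global_commit_index n C > k"

end

theory Submission
  imports Defs
begin

text \<open>
  The scheduler sets done_marker only after a check_done that read decrease_cnt = c, then saw
  both indices at least n, then num_active_tasks = 0, and then read decrease_cnt = c again.
  A thread that lowers an index increments decrease_cnt before it gives up its active task, so an
  unchanged counter means the indices were still at least n when no task was active.  In such a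
  quiescent configuration every transaction is EXECUTED, by induction on its index: a
  READY_TO_EXECUTE transaction below execution_idx needs a thread about to claim it or to lower
  execution_idx, an EXECUTING one a thread executing it, and an ABORTING one a thread completing
  its abort or resuming its dependents, or else a dependency on a smaller transaction that is not
  EXECUTED.  The resulting state (all transactions EXECUTED, both indices at least n, no thread
  holding a task or an index below n) is stable under every step, so it still holds when a
  thread joins, and then the global commit index is at least n.
\<close>

lemma ex_fun_upd_other: "\<exists>y. P (f y) \<Longrightarrow> \<not> P (f a) \<Longrightarrow> \<exists>y. P ((f(a := b)) y)"
  by (metis fun_upd_other)

lemma card_Collect_fun_upd:
  assumes "finite {x. P (f x)}"
  shows "finite {x. P ((f(a := b)) x)}"
    and "int (card {x. P ((f(a := b)) x)})
         = int (card {x. P (f x)}) + (if P b then 1 else 0) - (if P (f a) then 1 else 0)"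
proof -
  let ?rest = "{x. P (f x)} - {a}"
  have upd: "{x. P ((f(a := b)) x)} = (if P b then insert a ?rest else ?rest)"
    by auto
  show "finite {x. P ((f(a := b)) x)}"
    unfolding upd using assms by simp
  have "card {x. P (f x)} = card ?rest + (if P (f a) then 1 else 0)"
    using assms card.remove[of "{x. P (f x)}" a] by auto
  moreover have "card {x. P ((f(a := b)) x)} = card ?rest + (if P b then 1 else 0)"
    unfolding upd using assms by (simp del: insert_Diff_single)
  ultimately show "int (card {x. P ((f(a := b)) x)})
         = int (card {x. P (f x)}) + (if P b then 1 else 0) - (if P (f a) then 1 else 0)"
    by simp
qed

lemma mv_read_READ_ERROR_less: "mv_read d p k = READ_ERROR b \<Longrightarrow> b < k"
  by (auto simp: mv_read_def Let_def split: if_splits option.splits entry.splits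
      intro: Max_in[THEN CollectD, THEN conjunct1])

section \<open>Roles of threads and the invariant\<close>

fun active :: "('l, 'v) tst \<Rightarrow> bool" where
  "active (Loop t) = (t \<noteq> None)"
| "active (Joined t) = (t \<noteq> None)"
| "active NT_V = False"
| "active (NT_E v) = False"
| "active NV_Chk = False"
| "active NV_Inc = False"
| "active NE_Chk = False"
| "active NE_Inc = False"
| "active CD1 = False"
| "active (CD2 c) = False"
| "active (CD3 c e) = False"
| "active (CD4 c) = False"
| "active (CD5 c) = False"
| "active CD6 = False"
| "active _ = True"

fun idle :: "nat \<Rightarrow> ('l, 'v) tst \<Rightarrow> bool" where
  "idle n (Loop t) = (t = None)"
| "idle n (Joined t) = (t = None)"
| "idle n NT_V = True"
| "idle n (NT_E v) = True"
| "idle n NV_Chk = True"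
| "idle n NV_Inc = True"
| "idle n NV_Fai = True"
| "idle n (NV_Status k) = (n \<le> k)"
| "idle n (NV_Dec k) = (n \<le> k)"
| "idle n NE_Chk = True"
| "idle n NE_Inc = True"
| "idle n NE_Fai = True"
| "idle n (NE_TI k) = (n \<le> k)"
| "idle n NE_TIDec = True"
| "idle n CD1 = True"
| "idle n (CD2 c) = True"
| "idle n (CD3 c e) = True"
| "idle n (CD4 c) = True"
| "idle n (CD5 c) = True"
| "idle n CD6 = True"
| "idle n _ = False"

text \<open>The thread will incarnate j, or it will lower execution_idx to at most j.\<close>

fun owns_ready :: "('l, 'v) tst \<Rightarrow> nat \<Rightarrow> bool" where
  "owns_ready (NE_TI k) j = (k = j)"
| "owns_ready (FE_Res k i w ds (Some m)) j = (m \<le> j)"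
| "owns_ready (FE_DecE k i w m) j = (m \<le> j)"
| "owns_ready (VA_DecV k i) j = (k = j)"
| "owns_ready (VA_Cnt k i) j = (k = j)"
| "owns_ready (VA_EI k i) j = (k = j)"
| "owns_ready (VA_TI k i) j = (k = j)"
| "owns_ready _ _ = False"

fun owns_executing :: "('l, 'v) tst \<Rightarrow> nat \<Rightarrow> bool" where
  "owns_executing (Loop (Some (ExecT k i))) j = (k = j)"
| "owns_executing (EX_Run k i rs ws wl h) j = (k = j)"
| "owns_executing (EX_Dep k i b) j = (k = j)"
| "owns_executing (REC_W k i R W todo) j = (k = j)"
| "owns_executing (REC_Prev k i R W) j = (k = j)"
| "owns_executing (REC_Rm k i R W w rm) j = (k = j)"
| "owns_executing (REC_LW k i R W w) j = (k = j)"
| "owns_executing (REC_LR k i R w) j = (k = j)"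
| "owns_executing (FE_Status k i w) j = (k = j)"
| "owns_executing _ _ = False"

text \<open>In states FE_Swap and FE_Res the thread resumes the dependents of a finished execution.\<close>

fun owns_aborting :: "(nat \<Rightarrow> nat set) \<Rightarrow> ('l, 'v) tst \<Rightarrow> nat \<Rightarrow> bool" where
  "owns_aborting D (VA_ConvStart k i) j = (k = j)"
| "owns_aborting D (VA_Conv k i L) j = (k = j)"
| "owns_aborting D (VA_Ready k i) j = (k = j)"
| "owns_aborting D (FE_Swap k i w) j = (j \<in> D k)"
| "owns_aborting D (FE_Res k i w ds mn) j = (j \<in> set ds)"
| "owns_aborting D _ _ = False"

fun local_ok :: "('l, 'v) tst \<Rightarrow> bool" where
  "local_ok (EX_Dep k i b) = (b < k)"
| "local_ok (FE_Res k i w ds mn) = (\<forall>d\<in>set ds. \<exists>m. mn = Some m \<and> m \<le> d)"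
| "local_ok _ = True"

text \<open>The index has been lowered but decrease_cnt not yet incremented.\<close>

fun eidx_decrease_pending :: "('l, 'v) tst \<Rightarrow> bool" where
  "eidx_decrease_pending (FE_CntE k i w) = True"
| "eidx_decrease_pending _ = False"

fun vidx_decrease_pending :: "('l, 'v) tst \<Rightarrow> bool" where
  "vidx_decrease_pending (FE_CntV k i) = True"
| "vidx_decrease_pending (VA_Cnt k i) = True"
| "vidx_decrease_pending _ = False"

lemma owns_imp_active:
  "owns_ready s j \<Longrightarrow> active s"
  "owns_executing s j \<Longrightarrow> active s"
  "owns_aborting D s j \<Longrightarrow> active s"
  "eidx_decrease_pending s \<Longrightarrow> active s"
  "vidx_decrease_pending s \<Longrightarrow> active s"
      apply (induction s j rule: owns_ready.induct; simp)
     apply (induction s j rule: owns_executing.induct; simp)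
    apply (induction D s j rule: owns_aborting.induct; simp)
   apply (cases s; simp)+
  done

lemma not_active_imp_idle: "\<not> active s \<Longrightarrow> idle n s"
  by (cases s rule: active.cases) auto

lemma idle_ongoing_ge: "idle n s \<Longrightarrow> ongoing s = Some j \<Longrightarrow> n \<le> j"
  by (cases s) auto

definition finished :: "nat \<Rightarrow> ('l, 'v) gst \<Rightarrow> ('t \<Rightarrow> ('l, 'v) tst) \<Rightarrow> bool" where
  "finished n g ls \<longleftrightarrow> n \<le> g_eidx g \<and> n \<le> g_vidx g \<and> (\<forall>j<n. snd (g_status g j) = EXECUTED)
     \<and> (\<forall>x. idle n (ls x))"

text \<open>
  In states CD2 c to CD5 c the value c was read from decrease_cnt; as long as decrease_cnt
  still equals c, every decrease of an index since that read is pending.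
\<close>

fun check_done_ok :: "nat \<Rightarrow> ('l, 'v) gst \<Rightarrow> ('t \<Rightarrow> ('l, 'v) tst) \<Rightarrow> ('l, 'v) tst \<Rightarrow> bool" where
  "check_done_ok n g ls (CD2 c) = (c \<le> g_dcnt g)"
| "check_done_ok n g ls (CD3 c e) = (c \<le> g_dcnt g \<and>
     (g_dcnt g = c \<longrightarrow> e \<le> g_eidx g \<or> (\<exists>y. eidx_decrease_pending (ls y))))"
| "check_done_ok n g ls (CD4 c) = (c \<le> g_dcnt g \<and>
     (g_dcnt g = c \<longrightarrow> (n \<le> g_eidx g \<or> (\<exists>y. eidx_decrease_pending (ls y)))
                    \<and> (n \<le> g_vidx g \<or> (\<exists>y. vidx_decrease_pending (ls y)))))"
| "check_done_ok n g ls (CD5 c) = (c \<le> g_dcnt g \<and> (g_dcnt g = c \<longrightarrow> finished n g ls))"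
| "check_done_ok n g ls CD6 = finished n g ls"
| "check_done_ok n g ls _ = True"

definition ready_inv :: "nat \<Rightarrow> ('l, 'v) gst \<Rightarrow> ('t \<Rightarrow> ('l, 'v) tst) \<Rightarrow> bool" where
  "ready_inv n g ls \<longleftrightarrow> (\<forall>j<n. snd (g_status g j) = READY_TO_EXECUTE \<longrightarrow>
     g_eidx g \<le> j \<or> (\<exists>x. owns_ready (ls x) j))"

definition executing_inv :: "nat \<Rightarrow> ('l, 'v) gst \<Rightarrow> ('t \<Rightarrow> ('l, 'v) tst) \<Rightarrow> bool" where
  "executing_inv n g ls \<longleftrightarrow> (\<forall>j<n. snd (g_status g j) = EXECUTING \<longrightarrow> (\<exists>x. owns_executing (ls x) j))"

definition aborting_inv :: "nat \<Rightarrow> ('l, 'v) gst \<Rightarrow> ('t \<Rightarrow> ('l, 'v) tst) \<Rightarrow> bool" where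
  "aborting_inv n g ls \<longleftrightarrow> (\<forall>j<n. snd (g_status g j) = ABORTING \<longrightarrow>
     (\<exists>x. owns_aborting (g_deps g) (ls x) j) \<or> (\<exists>b<j. j \<in> g_deps g b \<and> snd (g_status g b) \<noteq> EXECUTED))"

definition active_count_inv :: "('l, 'v) gst \<Rightarrow> ('t \<Rightarrow> ('l, 'v) tst) \<Rightarrow> bool" where
  "active_count_inv g ls \<longleftrightarrow> finite {x. active (ls x)} \<and> g_nact g = int (card {x. active (ls x)})"

definition block_inv :: "nat \<Rightarrow> ('l, 'v) gst \<Rightarrow> ('t \<Rightarrow> ('l, 'v) tst) \<Rightarrow> bool" where
  "block_inv n g ls \<longleftrightarrow> ready_inv n g ls \<and> executing_inv n g ls \<and> aborting_inv n g ls
     \<and> (\<forall>x. local_ok (ls x)) \<and> (\<forall>b. finite (g_deps g b)) \<and> active_count_inv g ls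
     \<and> (\<forall>x. check_done_ok n g ls (ls x)) \<and> (g_done g \<longrightarrow> finished n g ls)"

lemma block_inv_init: "block_inv n init_gst (\<lambda>_. Loop None)"
  by (simp add: block_inv_def ready_inv_def executing_inv_def aborting_inv_def active_count_inv_def
      init_gst_def)

lemma block_inv_thread:
  assumes "block_inv n g ls"
  shows "local_ok (ls t)" and "\<forall>b. finite (g_deps g b)" and "g_done g \<longrightarrow> idle n (ls t)"
  using assms by (auto simp: block_inv_def finished_def)

lemmas step1_splits =
  if_splits option.splits list.splits instr.splits read_result.splits task.splits prod.splits

lemma step1_dcnt_mono: "step1 n prog init g s = Some (g', l') \<Longrightarrow> g_dcnt g \<le> g_dcnt g'"
  by (cases s) (auto simp: Let_def split: step1_splits)

lemma step1_dcnt_Suc_if_pending: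
  "step1 n prog init g s = Some (g', l') \<Longrightarrow> eidx_decrease_pending s \<or> vidx_decrease_pending s
   \<Longrightarrow> g_dcnt g' = Suc (g_dcnt g)"
  by (cases s) auto

lemma step1_eidx_mono: "step1 n prog init g s = Some (g', l') \<Longrightarrow>
   g_eidx g \<le> g_eidx g' \<or> eidx_decrease_pending l'"
  by (cases s) (auto simp: Let_def split: step1_splits)

lemma step1_vidx_mono: "step1 n prog init g s = Some (g', l') \<Longrightarrow>
   g_vidx g \<le> g_vidx g' \<or> vidx_decrease_pending l'"
  by (cases s) (auto simp: Let_def split: step1_splits)

lemma step1_nact: "step1 n prog init g s = Some (g', l') \<Longrightarrow>
   g_nact g' = g_nact g + (if active l' then 1 else 0) - (if active s then 1 else 0)"
  by (cases s) (auto simp: Let_def split: step1_splits)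

lemma step1_done: "step1 n prog init g s = Some (g', l') \<Longrightarrow> g_done g' \<Longrightarrow> g_done g \<or> s = CD6"
  by (cases s) (auto simp: Let_def split: step1_splits)

lemma step1_to_Joined:
  "step1 n prog init g s = Some (g', l') \<Longrightarrow> \<not> is_joined s \<Longrightarrow> is_joined l' \<Longrightarrow>
   \<exists>x. s = Loop x \<and> g_done g \<and> g' = g \<and> l' = Joined x"
  by (cases s) (auto simp: Let_def split: step1_splits)

lemma step1_local_ok:
  "step1 n prog init g s = Some (g', l') \<Longrightarrow> local_ok s \<Longrightarrow> \<forall>b. finite (g_deps g b) \<Longrightarrow> local_ok l'"
  by (cases s) (auto simp: Let_def split: step1_splits dest: mv_read_READ_ERROR_less)

lemma step1_deps_finite:
  "step1 n prog init g s = Some (g', l') \<Longrightarrow> \<forall>b. finite (g_deps g b) \<Longrightarrow> \<forall>b. finite (g_deps g' b)"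
  by (cases s) (auto simp: Let_def split: step1_splits)

lemma step1_finished:
  "step1 n prog init g s = Some (g', l') \<Longrightarrow> finished n g ls \<Longrightarrow> idle n s \<Longrightarrow>
   finished n g' ls \<and> idle n l'"
  by (cases s) (auto simp: finished_def Let_def split: step1_splits)

lemma step1_ready:
  assumes "step1 n prog init g s = Some (g', l')" "local_ok s" "g_done g \<longrightarrow> idle n s"
    and "j < n" "snd (g_status g' j) = READY_TO_EXECUTE"
  shows "g_eidx g' \<le> j \<or> owns_ready l' j
    \<or> (snd (g_status g j) = READY_TO_EXECUTE \<and> \<not> g_eidx g \<le> j \<and> \<not> owns_ready s j)"
  using assms by (cases s) (auto simp: Let_def split: step1_splits)

lemma step1_executing:
  assumes "step1 n prog init g s = Some (g', l')" "g_done g \<longrightarrow> idle n s"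
    and "j < n" "snd (g_status g' j) = EXECUTING"
  shows "owns_executing l' j \<or> (snd (g_status g j) = EXECUTING \<and> \<not> owns_executing s j)"
  using assms by (cases s) (auto simp: Let_def split: step1_splits)

lemma step1_aborting:
  assumes "step1 n prog init g s = Some (g', l')" "local_ok s" "g_done g \<longrightarrow> idle n s"
    and "\<forall>b. finite (g_deps g b)" "j < n" "snd (g_status g' j) = ABORTING"
  shows "owns_aborting (g_deps g') l' j
    \<or> (\<exists>b<j. j \<in> g_deps g' b \<and> snd (g_status g' b) \<noteq> EXECUTED)
    \<or> (snd (g_status g j) = ABORTING \<and> \<not> owns_aborting (g_deps g) s j)"
  using assms by (cases s) (auto simp: Let_def split: step1_splits)

lemma step1_deps_kept:
  assumes "step1 n prog init g s = Some (g', l')" "\<forall>b. finite (g_deps g b)" "j \<in> g_deps g b"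
  shows "j \<in> g_deps g' b \<or> owns_aborting (g_deps g') l' j"
  using assms by (cases s) (auto simp: Let_def split: step1_splits)

lemma step1_blocker_kept:
  assumes "step1 n prog init g s = Some (g', l')" "\<forall>b. finite (g_deps g b)"
    and "j \<in> g_deps g b" "snd (g_status g b) \<noteq> EXECUTED"
  shows "(j \<in> g_deps g' b \<and> snd (g_status g' b) \<noteq> EXECUTED) \<or> owns_aborting (g_deps g') l' j"
  using assms by (cases s) (auto simp: Let_def split: step1_splits)

lemma owns_aborting_kept:
  assumes "step1 n prog init g s0 = Some (g', l')" "\<forall>b. finite (g_deps g b)"
    and "owns_aborting (g_deps g) s j"
  shows "owns_aborting (g_deps g') s j \<or> owns_aborting (g_deps g') l' j"
  using assms by (cases "(g_deps g, s, j)" rule: owns_aborting.cases) (auto dest: step1_deps_kept)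

section \<open>Preservation of the invariant\<close>

lemma finished_step:
  assumes "finished n g ls" and "step1 n prog init g (ls t) = Some (g', l')"
  shows "finished n g' (ls(t := l'))"
proof -
  have "finished n g' ls \<and> idle n l'"
    using step1_finished[OF assms(2,1)] assms(1) by (simp add: finished_def)
  then show ?thesis by (simp add: finished_def)
qed

lemma ready_inv_step:
  assumes inv: "block_inv n g ls" and st: "step1 n prog init g (ls t) = Some (g', l')"
  shows "ready_inv n g' (ls(t := l'))"
  unfolding ready_inv_def
proof (intro allI impI)
  fix j assume j: "j < n" "snd (g_status g' j) = READY_TO_EXECUTE"
  have "g_eidx g' \<le> j \<or> owns_ready l' j
    \<or> (snd (g_status g j) = READY_TO_EXECUTE \<and> \<not> g_eidx g \<le> j \<and> \<not> owns_ready (ls t) j)"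
    using step1_ready[OF st block_inv_thread(1,3)[OF inv] j] .
  moreover have "snd (g_status g j) = READY_TO_EXECUTE \<Longrightarrow> g_eidx g \<le> j \<or> (\<exists>x. owns_ready (ls x) j)"
    using inv j(1) by (simp add: block_inv_def ready_inv_def)
  ultimately show "g_eidx g' \<le> j \<or> (\<exists>x. owns_ready ((ls(t := l')) x) j)"
    by (metis fun_upd_other fun_upd_same)
qed

lemma executing_inv_step:
  assumes inv: "block_inv n g ls" and st: "step1 n prog init g (ls t) = Some (g', l')"
  shows "executing_inv n g' (ls(t := l'))"
  unfolding executing_inv_def
proof (intro allI impI)
  fix j assume j: "j < n" "snd (g_status g' j) = EXECUTING"
  have "owns_executing l' j \<or> (snd (g_status g j) = EXECUTING \<and> \<not> owns_executing (ls t) j)"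
    using step1_executing[OF st block_inv_thread(3)[OF inv] j] .
  moreover have "snd (g_status g j) = EXECUTING \<Longrightarrow> \<exists>x. owns_executing (ls x) j"
    using inv j(1) by (simp add: block_inv_def executing_inv_def)
  ultimately show "\<exists>x. owns_executing ((ls(t := l')) x) j"
    by (metis fun_upd_other fun_upd_same)
qed

lemma aborting_inv_step:
  assumes inv: "block_inv n g ls" and st: "step1 n prog init g (ls t) = Some (g', l')"
  shows "aborting_inv n g' (ls(t := l'))"
  unfolding aborting_inv_def
proof (intro allI impI)
  fix j assume j: "j < n" "snd (g_status g' j) = ABORTING"
  have fin: "\<forall>b. finite (g_deps g b)"
    using block_inv_thread(2)[OF inv] .
  let ?owner = "\<lambda>s. owns_aborting (g_deps g') s j"
  let ?blocked = "\<exists>b<j. j \<in> g_deps g' b \<and> snd (g_status g' b) \<noteq> EXECUTED"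
  have "?owner l' \<or> ?blocked
    \<or> (snd (g_status g j) = ABORTING \<and> \<not> owns_aborting (g_deps g) (ls t) j)"
    using step1_aborting[OF st block_inv_thread(1,3)[OF inv] fin j] .
  moreover have "snd (g_status g j) = ABORTING \<Longrightarrow> (\<exists>x. owns_aborting (g_deps g) (ls x) j)
      \<or> (\<exists>b<j. j \<in> g_deps g b \<and> snd (g_status g b) \<noteq> EXECUTED)"
    using inv j(1) by (simp add: block_inv_def aborting_inv_def)
  moreover have "?owner (ls x) \<or> ?owner l'" if "owns_aborting (g_deps g) (ls x) j" for x
    using owns_aborting_kept[OF st fin that] .
  moreover have "?blocked \<or> ?owner l'" if "b < j" "j \<in> g_deps g b" "snd (g_status g b) \<noteq> EXECUTED" for b
    using step1_blocker_kept[OF st fin that(2,3)] that(1) by blast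
  ultimately show "(\<exists>x. ?owner ((ls(t := l')) x)) \<or> ?blocked"
    by (metis fun_upd_other fun_upd_same)
qed

lemma active_count_inv_step:
  assumes "active_count_inv g ls" and "step1 n prog init g (ls t) = Some (g', l')"
  shows "active_count_inv g' (ls(t := l'))"
  using assms card_Collect_fun_upd[of active ls t l'] step1_nact[OF assms(2)]
  by (simp add: active_count_inv_def)

lemma all_executed_if_quiescent:
  assumes "ready_inv n g ls" "executing_inv n g ls" "aborting_inv n g ls"
    and "n \<le> g_eidx g" and "\<forall>x. \<not> active (ls x)"
  shows "\<forall>j<n. snd (g_status g j) = EXECUTED"
proof -
  have "j < n \<longrightarrow> snd (g_status g j) = EXECUTED" for j
  proof (induction j rule: less_induct)
    case (less j)
    show ?case
    proof
      assume "j < n"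
      then show "snd (g_status g j) = EXECUTED"
      proof (cases "snd (g_status g j)")
        case READY_TO_EXECUTE
        then show ?thesis
          using assms(1,4,5) \<open>j < n\<close> owns_imp_active(1) unfolding ready_inv_def by fastforce
      next
        case EXECUTING
        then show ?thesis
          using assms(2,5) \<open>j < n\<close> owns_imp_active(2) unfolding executing_inv_def by blast
      next
        case ABORTING
        then have "\<exists>b<j. snd (g_status g b) \<noteq> EXECUTED"
          using assms(3,5) \<open>j < n\<close> owns_imp_active(3) unfolding aborting_inv_def by blast
        then show ?thesis
          using less.IH \<open>j < n\<close> by (meson order.strict_trans)
      qed
    qed
  qed
  then show ?thesis by blast
qed

lemma finished_if_quiescent:
  assumes inv: "block_inv n g ls" and "g_nact g = 0"
    and "check_done_ok n g ls (CD4 c)" and "g_dcnt g = c"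
  shows "finished n g ls"
proof -
  have quiet: "\<forall>x. \<not> active (ls x)"
    using inv \<open>g_nact g = 0\<close> by (auto simp: block_inv_def active_count_inv_def)
  then have "n \<le> g_eidx g" and "n \<le> g_vidx g"
    using assms(3,4) owns_imp_active(4,5) by auto
  moreover have "\<forall>j<n. snd (g_status g j) = EXECUTED"
    using all_executed_if_quiescent[OF _ _ _ \<open>n \<le> g_eidx g\<close> quiet] inv by (simp add: block_inv_def)
  ultimately show ?thesis
    using quiet not_active_imp_idle by (auto simp: finished_def)
qed

lemma check_done_ok_other:
  assumes ok: "check_done_ok n g ls s" and st: "step1 n prog init g (ls t) = Some (g', l')"
  shows "check_done_ok n g' (ls(t := l')) s"
proof -
  have mono: "g_dcnt g \<le> g_dcnt g'"
    using step1_dcnt_mono[OF st] .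
  have unchanged: "g_dcnt g = c \<and> \<not> eidx_decrease_pending (ls t) \<and> \<not> vidx_decrease_pending (ls t)"
    if "c \<le> g_dcnt g" "g_dcnt g' = c" for c
    using that mono step1_dcnt_Suc_if_pending[OF st] by fastforce
  have eidx: "e \<le> g_eidx g' \<or> (\<exists>y. eidx_decrease_pending ((ls(t := l')) y))"
    if "e \<le> g_eidx g \<or> (\<exists>y. eidx_decrease_pending (ls y))" "\<not> eidx_decrease_pending (ls t)" for e
    using that step1_eidx_mono[OF st] ex_fun_upd_other[of eidx_decrease_pending ls t l']
    by (metis fun_upd_same order_trans)
  have vidx: "v \<le> g_vidx g' \<or> (\<exists>y. vidx_decrease_pending ((ls(t := l')) y))"
    if "v \<le> g_vidx g \<or> (\<exists>y. vidx_decrease_pending (ls y))" "\<not> vidx_decrease_pending (ls t)" for v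
    using that step1_vidx_mono[OF st] ex_fun_upd_other[of vidx_decrease_pending ls t l']
    by (metis fun_upd_same order_trans)
  have fin: "finished n g ls \<Longrightarrow> finished n g' (ls(t := l'))"
    using finished_step[where ls = ls and t = t, OF _ st] .
  show ?thesis
  proof (cases s)
    case (CD2 c)
    then show ?thesis using ok mono by simp
  next
    case (CD3 c e)
    then show ?thesis using ok mono unchanged[of c] eidx by auto
  next
    case (CD4 c)
    then show ?thesis using ok mono unchanged[of c] eidx vidx by auto
  next
    case (CD5 c)
    then show ?thesis using ok mono unchanged[of c] fin by auto
  next
    case CD6
    then show ?thesis using ok fin by simp
  qed simp_all
qed

lemma check_done_ok_self:
  assumes inv: "block_inv n g ls" and st: "step1 n prog init g (ls t) = Some (g', l')"
  shows "check_done_ok n g' (ls(t := l')) l'"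
proof -
  have ok: "check_done_ok n g ls (ls t)"
    using inv by (simp add: block_inv_def)
  have idle_upd: "finished n g (ls(t := s))" if "finished n g ls" "idle n s" for s
    using that by (simp add: finished_def)
  show ?thesis
  proof (cases "ls t")
    case (CD3 c e)
    show ?thesis
    proof (cases "n \<le> min e (g_vidx g)")
      case True
      then have gl: "g' = g" "l' = CD4 c"
        using st CD3 by auto
      have np: "\<not> eidx_decrease_pending (ls t)"
        using CD3 by simp
      have "c \<le> g_dcnt g" and "g_dcnt g = c \<longrightarrow> n \<le> g_eidx g \<or> (\<exists>y. eidx_decrease_pending (ls y))"
        using ok CD3 True by auto
      then show ?thesis
        using gl True ex_fun_upd_other[of eidx_decrease_pending ls t l', OF _ np]
        by (auto simp del: fun_upd_apply)
    next
      case False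
      then show ?thesis using st CD3 by auto
    qed
  next
    case (CD4 c)
    show ?thesis
    proof (cases "g_nact g = 0")
      case True
      then have gl: "g' = g" "l' = CD5 c"
        using st CD4 by auto
      have "g_dcnt g = c \<longrightarrow> finished n g ls"
        using finished_if_quiescent[OF inv True] ok CD4 by auto
      then show ?thesis
        using ok CD4 gl idle_upd by auto
    next
      case False
      then show ?thesis using st CD4 by auto
    qed
  next
    case (CD5 c)
    then show ?thesis
      using st ok idle_upd by (auto split: if_splits)
  qed (use st ok in \<open>auto simp: Let_def split: step1_splits\<close>)
qed

lemma block_inv_step:
  assumes inv: "block_inv n g ls" and st: "step1 n prog init g (ls t) = Some (g', l')"
  shows "block_inv n g' (ls(t := l'))"
proof -
  have "check_done_ok n g' (ls(t := l')) ((ls(t := l')) x)" for x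
    using check_done_ok_self[OF inv st] check_done_ok_other[where ls = ls and t = t, OF _ st] inv
    by (cases "x = t") (auto simp: block_inv_def)
  moreover have "finished n g' (ls(t := l'))" if "g_done g'"
  proof -
    have "check_done_ok n g ls (ls t)" and "g_done g \<longrightarrow> finished n g ls"
      using inv by (simp_all add: block_inv_def)
    then have "finished n g ls"
      using step1_done[OF st that] by auto
    then show ?thesis using finished_step[where ls = ls and t = t, OF _ st] by blast
  qed
  ultimately show ?thesis
    using ready_inv_step[OF inv st] executing_inv_step[OF inv st] aborting_inv_step[OF inv st]
      active_count_inv_step[where ls = ls and t = t, OF _ st]
      step1_local_ok[OF st] step1_deps_finite[OF st] inv
    by (auto simp: block_inv_def)
qed

lemma reachable_block_inv: "reachable n prog init C \<Longrightarrow> block_inv n (fst C) (snd C)"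
  unfolding reachable_def
proof (induction rule: rtranclp_induct)
  case base
  then show ?case using block_inv_init by (simp add: init_conf_def)
next
  case (step C C')
  then obtain t g' l' where st: "step1 n prog init (fst C) (snd C t) = Some (g', l')"
    and C': "C' = (g', (snd C)(t := l'))"
    by (auto simp: bstep_def)
  show ?case
    using block_inv_step[OF step.IH st] unfolding C' by (simp only: fst_conv snd_conv)
qed

lemma finished_globally_committed:
  assumes "finished n g ls" and "k < n"
  shows "globally_committed n (g, ls) k"
proof -
  have "n \<le> j" if "ongoing (ls x) = Some j" for x j
    using assms(1) that idle_ongoing_ge unfolding finished_def by blast
  then have "n \<le> global_commit_index n (g, ls)"
    using assms(1) unfolding global_commit_index_def finished_def
    by (intro cInf_greatest) auto
  then show ?thesis
    using assms(2) by (simp add: globally_committed_def)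
qed

theorem mainTheorem3:
  fixes n :: nat
    and prog :: "nat \<Rightarrow> 'v option list \<Rightarrow> ('l, 'v) instr"
    and init :: "'l \<Rightarrow> 'v"
    and t :: 't
    and C C' :: "('l, 'v, 't) conf"
  assumes "reachable n prog init C"
    and "bstep n prog init t C C'"
    and "\<not> is_joined (snd C t)"
    and "is_joined (snd C' t)"
  shows "\<forall>k < n. globally_committed n C' k"
proof -
  obtain g' l' where st: "step1 n prog init (fst C) (snd C t) = Some (g', l')"
    and C': "C' = (g', (snd C)(t := l'))"
    using assms(2) by (auto simp: bstep_def)
  then have "g_done (fst C)"
    using step1_to_Joined assms(3,4) by fastforce
  then have "finished n (fst C) (snd C)"
    using reachable_block_inv[OF assms(1)] by (simp add: block_inv_def)
  then have "finished n g' ((snd C)(t := l'))"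
    using finished_step[where ls = "snd C" and t = t, OF _ st] by blast
  then show ?thesis
    unfolding C' using finished_globally_committed by blast
qed

end
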